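(* For $n\ge 4$, the dom-stability of the path $P_n$ is $St_{dom}(P_n)=2$ if $n\equiv 3\pmod 4$, and $St_{dom}(P_n)=1$ otherwise.
   Context: A dominated coloring of a graph is a proper coloring in which every color class is dominated by at least one vertex, i.e. for each color class $C$ there is a vertex adjacent to every vertex of $C$; $\chi_{dom}(G)$ is the minimum number of colors in a dominated coloring. The dom-stability $St_{dom}(G)$ is the minimum number of vertices of $G$ whose removal changes the dominated chromatic number of $G$. *)

theory Defs
  imports Main
begin

text \<open>A (simple) graph is given by a vertex set V and a symmetric irreflexive
adjacency relation E. Removing a set S of vertices yields the induced subgraph
on V - S (same relation E, smaller vertex set).\<close>

text \<open>On graphs without isolated vertices this agrees with the open-neighbourhood
version, since in a proper colouring a class containing its dominator is a
singleton.\<close>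
definition dominates :: "'a set \<Rightarrow> ('a \<Rightarrow> 'a \<Rightarrow> bool) \<Rightarrow> 'a \<Rightarrow> 'a set \<Rightarrow> bool" where
  "dominates V E v C \<longleftrightarrow> v \<in> V \<and> (\<forall>u\<in>C. u = v \<or> E v u)"

definition proper_coloring :: "'a set \<Rightarrow> ('a \<Rightarrow> 'a \<Rightarrow> bool) \<Rightarrow> ('a \<Rightarrow> nat) \<Rightarrow> bool" where
  "proper_coloring V E c \<longleftrightarrow> (\<forall>u\<in>V. \<forall>v\<in>V. E u v \<longrightarrow> c u \<noteq> c v)"

definition dominated_coloring :: "'a set \<Rightarrow> ('a \<Rightarrow> 'a \<Rightarrow> bool) \<Rightarrow> ('a \<Rightarrow> nat) \<Rightarrow> bool" where
  "dominated_coloring V E c \<longleftrightarrow> proper_coloring V E c \<and>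
     (\<forall>i\<in>c ` V. \<exists>v. dominates V E v {u\<in>V. c u = i})"

definition chi_dom :: "'a set \<Rightarrow> ('a \<Rightarrow> 'a \<Rightarrow> bool) \<Rightarrow> nat" where
  "chi_dom V E = (LEAST k. \<exists>c. dominated_coloring V E c \<and> card (c ` V) = k)"

definition dom_stability :: "'a set \<Rightarrow> ('a \<Rightarrow> 'a \<Rightarrow> bool) \<Rightarrow> nat" where
  "dom_stability V E = (LEAST k. \<exists>S\<subseteq>V. card S = k \<and> chi_dom (V - S) E \<noteq> chi_dom V E)"

definition path_vertices :: "nat \<Rightarrow> nat set" where
  "path_vertices n = {..<n}"

definition path_adj :: "nat \<Rightarrow> nat \<Rightarrow> bool" where
  "path_adj i j \<longleftrightarrow> i + 1 = j \<or> j + 1 = i"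

end

theory Submission
  imports Defs
begin

(* Write chi(m) = 2 (m div 4) + min (m mod 4) 2. This is the dominated chromatic number of the
   path on m vertices: cutting the path into blocks of four, the vertices 4q, 4q+2 share a colour
   dominated by 4q+1 and 4q+1, 4q+3 share one dominated by 4q+2; conversely two non-adjacent
   vertices of one colour class have a common neighbour, hence are at distance 2, so the chi(m)
   vertices congruent to 0 or 1 mod 4 get pairwise distinct colours.
   A colour class lies in the closed neighbourhood of one vertex, so chi_dom is additive over
   disjoint unions; deleting vertex i from P_n therefore gives chi(i) + chi(n-1-i). For
   n = 3 mod 4 this always equals chi(n), whereas deleting both end vertices leaves P_(n-2)
   with chi(n-2) < chi(n); for the other residues deleting one suitable vertex already changes
   the value. *)

lemma chi_dom_le:
  assumes "dominated_coloring V E c"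
  shows "chi_dom V E \<le> card (c ` V)"
  unfolding chi_dom_def using assms by (intro Least_le) blast

lemma chi_dom_attained:
  assumes "dominated_coloring V E c"
  obtains c' where "dominated_coloring V E c'" "card (c' ` V) = chi_dom V E"
  using LeastI_ex[of "\<lambda>k. \<exists>c. dominated_coloring V E c \<and> card (c ` V) = k"] assms
  unfolding chi_dom_def by blast

lemma dominated_coloring_inj_on:
  assumes "inj_on c V" "\<And>v. v \<in> V \<Longrightarrow> \<not> E v v"
  shows "dominated_coloring V E c"
proof -
  have "dominates V E v {u\<in>V. c u = c v}" if "v \<in> V" for v
    using that assms(1) unfolding dominates_def by (auto dest: inj_onD)
  then show ?thesis
    using assms unfolding dominated_coloring_def proper_coloring_def by (auto dest: inj_onD)
qed

lemma card_le_chi_dom: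
  assumes "finite V" "dominated_coloring V E c0" "T \<subseteq> V"
    and no_common_dominator:
      "\<And>u v d. u \<in> T \<Longrightarrow> v \<in> T \<Longrightarrow> u \<noteq> v \<Longrightarrow> \<not> E u v \<Longrightarrow> \<not> dominates V E d {u, v}"
  shows "card T \<le> chi_dom V E"
proof -
  obtain c where c: "dominated_coloring V E c" "card (c ` V) = chi_dom V E"
    using chi_dom_attained[OF assms(2)] .
  have "inj_on c T"
  proof (rule inj_onI, rule ccontr)
    fix u v assume uv: "u \<in> T" "v \<in> T" "c u = c v" "u \<noteq> v"
    with assms(3) have "u \<in> V" "v \<in> V" by auto
    with c(1) uv(3) obtain d where "dominates V E d {w\<in>V. c w = c u}"
      unfolding dominated_coloring_def by blast
    with \<open>u \<in> V\<close> \<open>v \<in> V\<close> uv(3) have "dominates V E d {u, v}"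
      unfolding dominates_def by auto
    moreover have "\<not> E u v"
      using c(1) \<open>u \<in> V\<close> \<open>v \<in> V\<close> uv(3)
      unfolding dominated_coloring_def proper_coloring_def by auto
    ultimately show False using no_common_dominator uv by blast
  qed
  then have "card T = card (c ` T)" by (simp add: card_image)
  also have "\<dots> \<le> card (c ` V)" using assms(1,3) by (intro card_mono) auto
  finally show ?thesis using c(2) by simp
qed

lemma dominated_coloring_Un:
  assumes c1: "dominated_coloring A E c1" and c2: "dominated_coloring B E c2"
    and bound: "c1 ` A \<subseteq> {..<p}"
  defines "c \<equiv> \<lambda>v. if v \<in> A then c1 v else p + c2 v"
  shows "dominated_coloring (A \<union> B) E c"
proof -
  have lt: "c1 v < p" if "v \<in> A" for v using bound that by auto
  have "c u \<noteq> c v" if "u \<in> A \<union> B" "v \<in> A \<union> B" "E u v" for u v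
    using that c1 c2 lt[of u] lt[of v]
    unfolding dominated_coloring_def proper_coloring_def c_def by (auto split: if_splits)
  then have "proper_coloring (A \<union> B) E c" unfolding proper_coloring_def by blast
  moreover have "\<exists>d. dominates (A \<union> B) E d {u\<in>A \<union> B. c u = c x}" if x: "x \<in> A \<union> B" for x
  proof (cases "x \<in> A")
    case True
    then obtain d where "dominates A E d {u\<in>A. c1 u = c1 x}"
      using c1 unfolding dominated_coloring_def by blast
    moreover have "{u\<in>A \<union> B. c u = c x} = {u\<in>A. c1 u = c1 x}"
      using True lt[OF True] unfolding c_def by (auto split: if_splits)
    ultimately show ?thesis unfolding dominates_def by auto
  next
    case False
    then obtain d where "dominates B E d {u\<in>B. c2 u = c2 x}"
      using x c2 unfolding dominated_coloring_def by blast
    moreover have "{u\<in>A \<union> B. c u = c x} \<subseteq> {u\<in>B. c2 u = c2 x}"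
      using False lt unfolding c_def by (auto split: if_splits dest: lt)
    ultimately show ?thesis unfolding dominates_def by blast
  qed
  ultimately show ?thesis unfolding dominated_coloring_def by blast
qed

lemma dominated_coloring_restrict:
  assumes "dominated_coloring V E c" "A \<subseteq> V"
    and "\<And>d u. d \<in> V - A \<Longrightarrow> u \<in> A \<Longrightarrow> \<not> E d u"
  shows "dominated_coloring A E c"
proof -
  have "\<exists>d. dominates A E d {u\<in>A. c u = c x}" if "x \<in> A" for x
  proof -
    obtain d where d: "dominates V E d {u\<in>V. c u = c x}"
      using assms(1,2) \<open>x \<in> A\<close> unfolding dominated_coloring_def by blast
    then have "x = d \<or> E d x" "d \<in> V"
      using assms(2) \<open>x \<in> A\<close> unfolding dominates_def by auto
    then have "d \<in> A" using assms(3) \<open>x \<in> A\<close> by blast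
    with d assms(2) show ?thesis unfolding dominates_def by blast
  qed
  moreover have "proper_coloring A E c"
    using assms(1,2) unfolding dominated_coloring_def proper_coloring_def by blast
  ultimately show ?thesis unfolding dominated_coloring_def by blast
qed

lemma chi_dom_Un:
  assumes "finite A" "finite B" "A \<inter> B = {}"
    and no_edges: "\<And>u v. u \<in> A \<Longrightarrow> v \<in> B \<Longrightarrow> \<not> E u v \<and> \<not> E v u"
    and "dominated_coloring A E cA" "dominated_coloring B E cB"
  shows "chi_dom (A \<union> B) E = chi_dom A E + chi_dom B E"
proof (rule antisym)
  obtain c1 where c1: "dominated_coloring A E c1" "card (c1 ` A) = chi_dom A E"
    using chi_dom_attained assms(5) by blast
  obtain c2 where c2: "dominated_coloring B E c2" "card (c2 ` B) = chi_dom B E"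
    using chi_dom_attained assms(6) by blast
  obtain p where p: "c1 ` A \<subseteq> {..<p}"
    using \<open>finite A\<close> finite_nat_set_iff_bounded[of "c1 ` A"] by blast
  define c where "c v = (if v \<in> A then c1 v else p + c2 v)" for v
  have c: "dominated_coloring (A \<union> B) E c"
    unfolding c_def using dominated_coloring_Un[OF c1(1) c2(1) p] .
  have "c ` (A \<union> B) \<subseteq> c1 ` A \<union> (+) p ` c2 ` B" unfolding c_def by auto
  then have "card (c ` (A \<union> B)) \<le> card (c1 ` A \<union> (+) p ` c2 ` B)"
    using assms(1,2) by (intro card_mono) auto
  also have "\<dots> \<le> card (c1 ` A) + card ((+) p ` c2 ` B)" by (rule card_Un_le)
  also have "\<dots> = card (c1 ` A) + card (c2 ` B)" by (simp add: card_image)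
  finally have "card (c ` (A \<union> B)) \<le> card (c1 ` A) + card (c2 ` B)" .
  then show "chi_dom (A \<union> B) E \<le> chi_dom A E + chi_dom B E"
    using chi_dom_le[OF c] c1(2) c2(2) by simp
next
  obtain p where "cA ` A \<subseteq> {..<p}"
    using \<open>finite A\<close> finite_nat_set_iff_bounded[of "cA ` A"] by blast
  from dominated_coloring_Un[OF assms(5,6) this]
  obtain c where c: "dominated_coloring (A \<union> B) E c" "card (c ` (A \<union> B)) = chi_dom (A \<union> B) E"
    by (rule chi_dom_attained)
  have "dominated_coloring A E c" "dominated_coloring B E c"
    using dominated_coloring_restrict[OF c(1)] no_edges assms(3) by blast+
  then have "chi_dom A E + chi_dom B E \<le> card (c ` A) + card (c ` B)"
    by (simp add: add_mono chi_dom_le)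
  also have "\<dots> = card (c ` (A \<union> B))"
  proof -
    have "c x \<noteq> c y" if "x \<in> A" "y \<in> B" for x y
    proof
      assume "c x = c y"
      moreover obtain d where "dominates (A \<union> B) E d {u\<in>A \<union> B. c u = c x}"
        using c(1) \<open>x \<in> A\<close> unfolding dominated_coloring_def by blast
      ultimately have "d \<in> A \<union> B" "x = d \<or> E d x" "y = d \<or> E d y"
        using that unfolding dominates_def by auto
      then show False using that no_edges assms(3) by blast
    qed
    then have "c ` A \<inter> c ` B = {}" by blast
    then show ?thesis using assms(1,2) by (simp add: card_Un_disjoint image_Un)
  qed
  finally show "chi_dom A E + chi_dom B E \<le> chi_dom (A \<union> B) E" using c(2) by simp
qed

lemma dominated_coloring_cong:
  "(\<And>v. v \<in> V \<Longrightarrow> c v = c' v) \<Longrightarrow> dominated_coloring V E c \<longleftrightarrow> dominated_coloring V E c'"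
proof -
  assume same: "\<And>v. v \<in> V \<Longrightarrow> c v = c' v"
  then have "c ` V = c' ` V" "\<And>i. {u\<in>V. c u = i} = {u\<in>V. c' u = i}" by auto
  with same show ?thesis unfolding dominated_coloring_def proper_coloring_def by simp
qed

lemma dominated_coloring_image_iff:
  assumes "inj_on f V" and adj: "\<And>u v. u \<in> V \<Longrightarrow> v \<in> V \<Longrightarrow> E' (f u) (f v) \<longleftrightarrow> E u v"
  shows "dominated_coloring (f ` V) E' c \<longleftrightarrow> dominated_coloring V E (c \<circ> f)"
proof -
  have proper: "proper_coloring (f ` V) E' c \<longleftrightarrow> proper_coloring V E (c \<circ> f)"
    unfolding proper_coloring_def using adj by auto
  have dom: "dominates (f ` V) E' (f d) {w\<in>f ` V. c w = i} \<longleftrightarrow>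
      dominates V E d {u\<in>V. c (f u) = i}" if "d \<in> V" for d i
  proof -
    have "{w\<in>f ` V. c w = i} = f ` {u\<in>V. c (f u) = i}" by auto
    then show ?thesis
      using that adj unfolding dominates_def by (auto simp: inj_on_eq_iff[OF assms(1)])
  qed
  have "(\<exists>d. dominates (f ` V) E' d {w\<in>f ` V. c w = i}) \<longleftrightarrow>
      (\<exists>d. dominates V E d {u\<in>V. c (f u) = i})" for i
  proof
    assume "\<exists>d. dominates (f ` V) E' d {w\<in>f ` V. c w = i}"
    then obtain d where d: "dominates (f ` V) E' d {w\<in>f ` V. c w = i}" by blast
    then obtain d' where "d' \<in> V" "d = f d'" unfolding dominates_def by blast
    with d dom show "\<exists>d. dominates V E d {u\<in>V. c (f u) = i}" by blast
  next
    assume "\<exists>d. dominates V E d {u\<in>V. c (f u) = i}"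
    then obtain d where d: "dominates V E d {u\<in>V. c (f u) = i}" by blast
    then have "d \<in> V" unfolding dominates_def by blast
    with d dom show "\<exists>d. dominates (f ` V) E' d {w\<in>f ` V. c w = i}" by blast
  qed
  with proper show ?thesis unfolding dominated_coloring_def by (simp add: image_comp)
qed

lemma chi_dom_image:
  assumes "inj_on f V" "\<And>u v. u \<in> V \<Longrightarrow> v \<in> V \<Longrightarrow> E' (f u) (f v) \<longleftrightarrow> E u v"
  shows "chi_dom (f ` V) E' = chi_dom V E"
proof -
  have "(\<exists>c. dominated_coloring (f ` V) E' c \<and> card (c ` f ` V) = k) \<longleftrightarrow>
        (\<exists>c. dominated_coloring V E c \<and> card (c ` V) = k)" for k
  proof
    assume "\<exists>c. dominated_coloring (f ` V) E' c \<and> card (c ` f ` V) = k"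
    then obtain c where "dominated_coloring (f ` V) E' c" "card (c ` f ` V) = k" by blast
    then have "dominated_coloring V E (c \<circ> f)" "card ((c \<circ> f) ` V) = k"
      using dominated_coloring_image_iff[of f V E' E, OF assms] by (simp_all add: image_comp)
    then show "\<exists>c. dominated_coloring V E c \<and> card (c ` V) = k" by blast
  next
    assume "\<exists>c. dominated_coloring V E c \<and> card (c ` V) = k"
    then obtain c where c: "dominated_coloring V E c" "card (c ` V) = k" by blast
    define c' where "c' = c \<circ> inv_into V f"
    have same: "(c' \<circ> f) v = c v" if "v \<in> V" for v
      unfolding c'_def using assms(1) that by simp
    have "dominated_coloring V E (c' \<circ> f)"
      using dominated_coloring_cong[of V "c' \<circ> f" c E] same c(1) by blast
    then have "dominated_coloring (f ` V) E' c'"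
      using dominated_coloring_image_iff[of f V E' E, OF assms] by simp
    moreover have "c' ` f ` V = c ` V"
      using same by (simp add: image_comp cong: image_cong)
    ultimately show "\<exists>c. dominated_coloring (f ` V) E' c \<and> card (c ` f ` V) = k"
      using c(2) by auto
  qed
  then show ?thesis unfolding chi_dom_def by simp
qed

lemma dom_stability_eqI:
  assumes "S \<subseteq> V" "card S = k" "chi_dom (V - S) E \<noteq> chi_dom V E"
    and "\<And>S. S \<subseteq> V \<Longrightarrow> card S < k \<Longrightarrow> chi_dom (V - S) E = chi_dom V E"
  shows "dom_stability V E = k"
  unfolding dom_stability_def
proof (rule Least_equality)
  show "\<exists>S\<subseteq>V. card S = k \<and> chi_dom (V - S) E \<noteq> chi_dom V E" using assms(1-3) by blast
next
  fix k' assume "\<exists>S\<subseteq>V. card S = k' \<and> chi_dom (V - S) E \<noteq> chi_dom V E"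
  then show "k \<le> k'" using assms(4) not_less by blast
qed

definition path_chi_dom :: "nat \<Rightarrow> nat" where
  "path_chi_dom m = 2 * (m div 4) + min (m mod 4) 2"

definition path_coloring :: "nat \<Rightarrow> nat" where
  "path_coloring x = 2 * (x div 4) + x mod 4 mod 2"

lemma path_chi_dom_block: "r < 4 \<Longrightarrow> path_chi_dom (4 * q + r) = 2 * q + min r 2"
  unfolding path_chi_dom_def by simp

lemma nat_div_mod_4:
  fixes x :: nat
  obtains q r
  where "x = 4 * q + r" "x div 4 = q" "x mod 4 = r" "r = 0 \<or> r = 1 \<or> r = 2 \<or> r = 3"
proof -
  have "x mod 4 < 4" by simp
  then have "x mod 4 = 0 \<or> x mod 4 = 1 \<or> x mod 4 = 2 \<or> x mod 4 = 3" by linarith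
  then show thesis using that[of "x div 4" "x mod 4"] by simp
qed

lemma path_coloring_less:
  assumes "x < m" shows "path_coloring x < path_chi_dom m"
proof -
  obtain q r where x: "x = 4 * q + r" "x div 4 = q" "x mod 4 = r" "r = 0 \<or> r = 1 \<or> r = 2 \<or> r = 3"
    by (rule nat_div_mod_4)
  obtain q' r' where m: "m = 4 * q' + r'" "m div 4 = q'" "m mod 4 = r'"
    "r' = 0 \<or> r' = 1 \<or> r' = 2 \<or> r' = 3"
    by (rule nat_div_mod_4)
  have "4 * q + r < 4 * q' + r'" using assms x(1) m(1) by simp
  with x(4) m(4) have "2 * q + r mod 2 < 2 * q' + min r' 2" by (auto; presburger)
  then show ?thesis unfolding path_coloring_def path_chi_dom_def x(2,3) m(2,3) .
qed

lemma path_coloring_Suc: "path_coloring (Suc x) \<noteq> path_coloring x"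
proof -
  obtain q r where x: "x = 4 * q + r" "x div 4 = q" "x mod 4 = r" "r = 0 \<or> r = 1 \<or> r = 2 \<or> r = 3"
    by (rule nat_div_mod_4)
  obtain q' r' where y: "Suc x = 4 * q' + r'" "Suc x div 4 = q'" "Suc x mod 4 = r'"
    "r' = 0 \<or> r' = 1 \<or> r' = 2 \<or> r' = 3"
    by (rule nat_div_mod_4)
  have "4 * q' + r' = 4 * q + r + 1" using x(1) y(1) by simp
  with x(4) y(4) have "2 * q' + r' mod 2 \<noteq> 2 * q + r mod 2" by (auto; presburger)
  then show ?thesis unfolding path_coloring_def x(2,3) y(2,3) .
qed

(* The dominator is 4q+1 or 4q+2 inside the block of x = 4q+r; the cut-off at m - 1 covers a
   truncated last block, whose classes are then single vertices or dominated by that end vertex. *)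
lemma path_coloring_class_dominated:
  assumes "x < m"
  shows "dominates {..<m} path_adj (min (4 * (x div 4) + 1 + x mod 4 mod 2) (m - 1))
           {z\<in>{..<m}. path_coloring z = path_coloring x}"
proof -
  obtain q r where x: "x = 4 * q + r" "x div 4 = q" "x mod 4 = r" "r = 0 \<or> r = 1 \<or> r = 2 \<or> r = 3"
    by (rule nat_div_mod_4)
  have "z = min (4 * q + 1 + r mod 2) (m - 1) \<or> path_adj (min (4 * q + 1 + r mod 2) (m - 1)) z"
    if "z < m" "path_coloring z = path_coloring x" for z
  proof -
    obtain q' r' where z: "z = 4 * q' + r'" "z div 4 = q'" "z mod 4 = r'"
      "r' = 0 \<or> r' = 1 \<or> r' = 2 \<or> r' = 3"
      by (rule nat_div_mod_4)
    have "2 * q' + r' mod 2 = 2 * q + r mod 2"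
      using that(2) unfolding path_coloring_def x(2,3) z(2,3) .
    with x(4) z(4) have "q' = q" "r' mod 2 = r mod 2" by (auto; presburger)+
    with x z(1,4) assms that(1) show ?thesis unfolding path_adj_def by (auto; presburger)
  qed
  then show ?thesis using assms unfolding dominates_def x(2,3) by auto
qed

lemma mod_4_less_2_add_2:
  fixes u :: nat
  assumes "u mod 4 < 2" shows "(u + 2) mod 4 \<ge> 2"
proof -
  have "(u + 2) mod 4 = (u mod 4 + 2) mod 4" by (rule mod_add_left_eq[symmetric])
  moreover have "u mod 4 = 0 \<or> u mod 4 = 1" using assms by auto
  ultimately show ?thesis by auto
qed

lemma path_chi_dom_Suc:
  "path_chi_dom (Suc m) = path_chi_dom m + (if m mod 4 < 2 then 1 else 0)"
proof -
  obtain q r where x: "m = 4 * q + r" "m div 4 = q" "m mod 4 = r" "r = 0 \<or> r = 1 \<or> r = 2 \<or> r = 3"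
    by (rule nat_div_mod_4)
  obtain q' r' where y: "Suc m = 4 * q' + r'" "Suc m div 4 = q'" "Suc m mod 4 = r'"
    "r' = 0 \<or> r' = 1 \<or> r' = 2 \<or> r' = 3"
    by (rule nat_div_mod_4)
  have "4 * q' + r' = 4 * q + r + 1" using x(1) y(1) by simp
  with x(4) y(4) have "2 * q' + min r' 2 = 2 * q + min r 2 + (if r < 2 then 1 else 0)"
    by (auto; presburger)
  then show ?thesis unfolding path_chi_dom_def x(2,3) y(2,3) .
qed

lemma card_mod_4_less_2: "card {x. x < m \<and> x mod 4 < (2::nat)} = path_chi_dom m"
proof (induction m)
  case 0
  then show ?case by (simp add: path_chi_dom_def)
next
  case (Suc m)
  have "{x. x < Suc m \<and> x mod 4 < 2} =
    (if m mod 4 < 2 then insert m {x. x < m \<and> x mod 4 < 2}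
     else {x. x < m \<and> x mod 4 < (2::nat)})"
    by (auto simp: less_Suc_eq)
  then show ?case using Suc.IH by (simp add: path_chi_dom_Suc)
qed

lemma dominated_coloring_path_id: "dominated_coloring V path_adj id"
  by (rule dominated_coloring_inj_on) (auto simp: path_adj_def)

lemma chi_dom_path: "chi_dom {..<m} path_adj = path_chi_dom m"
proof (rule antisym)
  have "proper_coloring {..<m} path_adj path_coloring"
    unfolding proper_coloring_def path_adj_def
    using path_coloring_Suc path_coloring_Suc[THEN not_sym] by auto
  moreover have "\<exists>d. dominates {..<m} path_adj d {z\<in>{..<m}. path_coloring z = i}"
    if "i \<in> path_coloring ` {..<m}" for i
  proof -
    from that obtain x where "x < m" "i = path_coloring x" by auto
    with path_coloring_class_dominated show ?thesis by blast
  qed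
  ultimately have "dominated_coloring {..<m} path_adj path_coloring"
    unfolding dominated_coloring_def by blast
  then have "chi_dom {..<m} path_adj \<le> card (path_coloring ` {..<m})"
    by (rule chi_dom_le)
  also have "\<dots> \<le> card {..<path_chi_dom m}"
    using path_coloring_less by (intro card_mono) auto
  finally show "chi_dom {..<m} path_adj \<le> path_chi_dom m" by simp
next
  have "card {x. x < m \<and> x mod 4 < 2} \<le> chi_dom {..<m} path_adj"
  proof (rule card_le_chi_dom[OF _ dominated_coloring_path_id])
    fix u v d
    assume u: "u \<in> {x. x < m \<and> x mod 4 < 2}" and v: "v \<in> {x. x < m \<and> x mod 4 < 2}"
      and "u \<noteq> v" "\<not> path_adj u v"
    show "\<not> dominates {..<m} path_adj d {u, v}"
    proof
      assume "dominates {..<m} path_adj d {u, v}"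
      with \<open>u \<noteq> v\<close> \<open>\<not> path_adj u v\<close> have "u + 2 = v \<or> v + 2 = u"
        unfolding dominates_def path_adj_def by auto
      with u v mod_4_less_2_add_2 show False by fastforce
    qed
  qed auto
  then show "path_chi_dom m \<le> chi_dom {..<m} path_adj" by (simp add: card_mod_4_less_2)
qed

lemma chi_dom_path_interval: "chi_dom {a..<b} path_adj = path_chi_dom (b - a)"
proof -
  have "{a..<b} = (+) a ` {..<b - a}"
    by (cases "a \<le> b") (simp_all add: lessThan_atLeast0 add.commute)
  moreover have "chi_dom ((+) a ` {..<b - a}) path_adj = chi_dom {..<b - a} path_adj"
    by (rule chi_dom_image) (auto simp: path_adj_def)
  ultimately show ?thesis by (simp add: chi_dom_path)
qed

lemma chi_dom_path_remove_vertex: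
  assumes "i < n"
  shows "chi_dom ({..<n} - {i}) path_adj = path_chi_dom i + path_chi_dom (n - Suc i)"
proof -
  have "{..<n} - {i} = {0..<i} \<union> {Suc i..<n}" using assms by auto
  moreover have "chi_dom ({0..<i} \<union> {Suc i..<n}) path_adj
      = chi_dom {0..<i} path_adj + chi_dom {Suc i..<n} path_adj"
    by (rule chi_dom_Un[OF _ _ _ _ dominated_coloring_path_id dominated_coloring_path_id])
      (auto simp: path_adj_def)
  ultimately show ?thesis by (simp add: chi_dom_path_interval)
qed

lemma chi_dom_path_remove_ends:
  assumes "2 \<le> n"
  shows "chi_dom ({..<n} - {0, n - 1}) path_adj = path_chi_dom (n - 2)"
proof -
  have "{..<n} - {0, n - 1} = {1..<n - 1}" using assms by auto
  then show ?thesis by (simp add: chi_dom_path_interval numeral_2_eq_2)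
qed

lemma path_chi_dom_split_mod_4_eq_3:
  assumes "n mod 4 = 3" "i < n"
  shows "path_chi_dom i + path_chi_dom (n - Suc i) = path_chi_dom n"
proof -
  obtain q r where i: "i = 4 * q + r" "i div 4 = q" "i mod 4 = r" "r = 0 \<or> r = 1 \<or> r = 2 \<or> r = 3"
    by (rule nat_div_mod_4)
  obtain q' r' where j: "n - Suc i = 4 * q' + r'" "(n - Suc i) div 4 = q'" "(n - Suc i) mod 4 = r'"
    "r' = 0 \<or> r' = 1 \<or> r' = 2 \<or> r' = 3"
    by (rule nat_div_mod_4)
  obtain p where n: "n = 4 * p + 3" "n div 4 = p"
    using assms(1) by (metis div_mult_mod_eq mult.commute)
  have "4 * q + r + 4 * q' + r' + 1 = 4 * p + 3" using assms(2) i(1) j(1) n(1) by simp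
  with i(4) j(4) have "2 * q + min r 2 + (2 * q' + min r' 2) = 2 * p + 2" by (auto; presburger)
  then show ?thesis unfolding path_chi_dom_def i(2,3) j(2,3) n(2) assms(1) by simp
qed

lemma path_chi_dom_split_ne:
  assumes "4 \<le> n" "n mod 4 \<noteq> 3"
  obtains i where "i < n" "path_chi_dom i + path_chi_dom (n - Suc i) \<noteq> path_chi_dom n"
proof -
  obtain p r where n: "n = 4 * p + r" "r = 0 \<or> r = 1 \<or> r = 2 \<or> r = 3"
    by (rule nat_div_mod_4)
  show thesis
  proof (cases "r = 0")
    case True
    with n assms(1) have "n - 2 = 4 * (p - 1) + 2" "p \<ge> 1" by auto
    then have "path_chi_dom (n - 2) = 2 * (p - 1) + 2"
      using path_chi_dom_block[of 2 "p - 1"] by simp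
    moreover have "path_chi_dom 1 = 1" "path_chi_dom n = 2 * p"
      using path_chi_dom_block[of 0 p] n(1) True by (simp_all add: path_chi_dom_def)
    ultimately show thesis using that[of 1] assms(1) \<open>p \<ge> 1\<close> by (simp add: numeral_2_eq_2)
  next
    case False
    with n assms(2) have "n - 1 = 4 * p + (r - 1)" "r = 1 \<or> r = 2" by auto
    then have "path_chi_dom (n - 1) + path_chi_dom 0 \<noteq> path_chi_dom n"
      using path_chi_dom_block[of "r - 1" p] path_chi_dom_block[of r p] n(1)
      by (auto simp: path_chi_dom_def)
    then show thesis using that[of "n - 1"] assms(1) by simp
  qed
qed

lemma path_chi_dom_less_mod_4_eq_3:
  assumes "n mod 4 = 3" shows "path_chi_dom (n - 2) < path_chi_dom n"
proof -
  obtain p where "n = 4 * p + 3" using assms by (metis div_mult_mod_eq mult.commute)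
  then have "n - 2 = 4 * p + 1" by simp
  with \<open>n = 4 * p + 3\<close> show ?thesis
    using path_chi_dom_block[of 1 p] path_chi_dom_block[of 3 p] by simp
qed

theorem mainTheorem8:
  fixes n :: nat
  assumes "n \<ge> 4"
  shows "dom_stability (path_vertices n) path_adj = (if n mod 4 = 3 then 2 else 1)"
proof (cases "n mod 4 = 3")
  case True
  have "dom_stability {..<n} path_adj = 2"
  proof (rule dom_stability_eqI)
    show "{0, n - 1} \<subseteq> {..<n}" "card {0, n - 1} = 2" using assms by auto
    show "chi_dom ({..<n} - {0, n - 1}) path_adj \<noteq> chi_dom {..<n} path_adj"
      using chi_dom_path_remove_ends[of n] path_chi_dom_less_mod_4_eq_3[OF True] assms
      by (simp add: chi_dom_path)
  next
    fix S assume S: "S \<subseteq> {..<n}" "card S < 2"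
    then have "S = {} \<or> (\<exists>i. S = {i})"
      by (metis card_0_eq card_1_singleton_iff finite_lessThan finite_subset less_2_cases)
    with S show "chi_dom ({..<n} - S) path_adj = chi_dom {..<n} path_adj"
      using chi_dom_path_remove_vertex path_chi_dom_split_mod_4_eq_3[OF True]
      by (auto simp: chi_dom_path)
  qed
  with True show ?thesis by (simp add: path_vertices_def)
next
  case False
  obtain i where i: "i < n" "path_chi_dom i + path_chi_dom (n - Suc i) \<noteq> path_chi_dom n"
    using path_chi_dom_split_ne[OF assms False] .
  have "dom_stability {..<n} path_adj = 1"
  proof (rule dom_stability_eqI)
    show "{i} \<subseteq> {..<n}" "card {i} = 1" using i by auto
    show "chi_dom ({..<n} - {i}) path_adj \<noteq> chi_dom {..<n} path_adj"
      using i by (simp add: chi_dom_path_remove_vertex chi_dom_path)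
  next
    fix S assume "S \<subseteq> {..<n}" "card S < 1"
    then have "S = {}" using finite_subset by fastforce
    then show "chi_dom ({..<n} - S) path_adj = chi_dom {..<n} path_adj" by simp
  qed
  with False show ?thesis by (simp add: path_vertices_def)
qed

end
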